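(* Fix $N\ge 2$. For each integer $E$ with $1\le E\le N(N-1)$, let $m(E)$ be the minimum of the graph entropy $\mathrm{H}_{\mathcal G}[\mathbf Z]$ over all directed graphs without self-loops on $N$ nodes with exactly $E$ edges. Then $m$ is nondecreasing: if $1\le E_1\le E_2\le N(N-1)$ then $m(E_1)\le m(E_2)$. That is, given the number of nodes, a graph with fewer edges has a smaller (or equal) lower bound of graph entropy.
   Context: A directed graph on $N\ge 2$ nodes without self-loops is encoded by a zero-diagonal binary matrix $\mathbf Z=(z_{ij})\in\{0,1\}^{N\times N}$, with $z_{ij}=1$ meaning a directed edge $(i,j)$. The in-degree of node $j$ is $d_j=\sum_{i=1}^N z_{ij}$, and the number of edges is $|\mathcal E|=\sum_{i\ne j} z_{ij}$. For $|\mathcal E|\ge 1$, the graph entropy is $$\mathrm{H}_{\mathcal G}[\mathbf Z]=-\frac{1}{\ln N}\sum_{j=1}^N \frac{d_j}{|\mathcal E|}\ln\frac{d_j}{|\mathcal E|},$$ with the convention $0\ln 0=0$. *)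

theory Defs
  imports Complex_Main
begin

text \<open>A directed graph without self-loops on nodes 0..N-1 is represented by its edge set
  Z, a set of pairs (i,j) with i \<noteq> j (z_ij = 1 iff (i,j) \<in> Z).\<close>

definition offdiag :: "nat \<Rightarrow> (nat \<times> nat) set" where
  "offdiag N = {(i, j). i < N \<and> j < N \<and> i \<noteq> j}"

definition digraphs :: "nat \<Rightarrow> nat \<Rightarrow> (nat \<times> nat) set set" where
  "digraphs N E = {Z. Z \<subseteq> offdiag N \<and> card Z = E}"

definition in_degree :: "(nat \<times> nat) set \<Rightarrow> nat \<Rightarrow> nat" where
  "in_degree Z j = card {i. (i, j) \<in> Z}"

text \<open>Graph entropy; note that 0 * ln 0 = 0 in Isabelle since ln 0 = 0.\<close>
definition graph_entropy :: "nat \<Rightarrow> (nat \<times> nat) set \<Rightarrow> real" where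
  "graph_entropy N Z = - (1 / ln (real N)) *
     (\<Sum>j<N. (real (in_degree Z j) / real (card Z)) * ln (real (in_degree Z j) / real (card Z)))"

definition min_entropy :: "nat \<Rightarrow> nat \<Rightarrow> real" where
  "min_entropy N E = Min (graph_entropy N ` digraphs N E)"

end

theory Submission imports Defs begin

text \<open>Write \<open>n = |E|\<close> and \<open>S = \<Sum>\<^sub>j d\<^sub>j ln d\<^sub>j\<close>; then the graph entropy is
  \<open>(ln n - S / n) / ln N\<close>. Deleting one edge that enters a node of smallest positive in-degree
  \<open>d\<close> replaces \<open>S\<close> by \<open>S - d ln d + (d - 1) ln (d - 1)\<close>. Since every positive in-degree is at
  least \<open>d\<close>, \<open>S \<ge> n ln d\<close>, and together with the monotonicity of \<open>t (ln (t + 1) - ln t)\<close>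
  (applied at \<open>d - 1 \<le> n - 1\<close>) this shows that the entropy does not increase. So a minimiser with \<open>E + 1\<close> edges
  loses an edge without gaining entropy, and induction on the number of edges finishes.\<close>

lemma mult_ln_succ_diff_mono:
  fixes a b :: real
  assumes "0 \<le> a" "a \<le> b"
  shows "a * (ln (a + 1) - ln a) \<le> b * (ln (b + 1) - ln b)"
proof (cases "a = 0")
  case True
  have "ln b \<le> ln (b + 1)"
    using assms by (cases "b = 0") auto
  then show ?thesis
    using True assms by simp
next
  case False
  show ?thesis
  proof (rule DERIV_nonneg_imp_increasing_open[of a b "\<lambda>t. t * (ln (t + 1) - ln t)"])
    show "a \<le> b" by fact
    show "continuous_on {a..b} (\<lambda>t. t * (ln (t + 1) - ln t))"
      using assms False by (intro continuous_intros) auto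
    fix x assume "a < x" "x < b"
    hence "0 < x" using assms by auto
    have "DERIV (\<lambda>t. t * (ln (t + 1) - ln t)) x :> ln (x + 1) - ln x + x * (1 / (x + 1) - 1 / x)"
      using \<open>0 < x\<close> by (auto intro!: derivative_eq_intros)
    moreover have "ln (x / (x + 1)) \<le> x / (x + 1) - 1"
      using \<open>0 < x\<close> by (intro ln_le_minus_one) auto
    then have "0 \<le> ln (x + 1) - ln x + x * (1 / (x + 1) - 1 / x)"
      using \<open>0 < x\<close> by (simp add: ln_div right_diff_distrib)
    ultimately show "\<exists>y. DERIV (\<lambda>t. t * (ln (t + 1) - ln t)) x :> y \<and> 0 \<le> y"
      by blast
  qed
qed

lemma ln_minus_mean_le_after_decrement:
  fixes n d S :: real
  assumes "2 \<le> n" "1 \<le> d" "d \<le> n" "n * ln d \<le> S"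
  shows "ln (n - 1) - (S - d * ln d + (d - 1) * ln (d - 1)) / (n - 1) \<le> ln n - S / n"
proof -
  define S' where "S' = S - d * ln d + (d - 1) * ln (d - 1)"
  have "(d - 1) * (ln d - ln (d - 1)) \<le> (n - 1) * (ln n - ln (n - 1))"
    using mult_ln_succ_diff_mono[of "d - 1" "n - 1"] assms by simp
  then have "n * ((d - 1) * (ln d - ln (d - 1))) \<le> n * ((n - 1) * (ln n - ln (n - 1)))"
    using assms by (intro mult_left_mono) auto
  moreover have "n * S' - (n - 1) * S = S - n * ln d - n * ((d - 1) * (ln d - ln (d - 1)))"
    unfolding S'_def by (simp add: algebra_simps)
  ultimately have "(n - 1) * S - n * ((n - 1) * (ln n - ln (n - 1))) \<le> n * S'"
    using assms(4) by linarith
  moreover have "0 < n - 1" using assms by simp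
  ultimately show ?thesis
    unfolding S'_def[symmetric] by (simp add: field_simps)
qed

lemma finite_offdiag: "finite (offdiag N)"
  unfolding offdiag_def by (rule finite_subset[of _ "{..<N} \<times> {..<N}"]) auto

lemma card_offdiag: "card (offdiag N) = N * (N - 1)"
proof -
  have "offdiag N = (SIGMA i:{..<N}. {..<N} - {i})"
    unfolding offdiag_def by auto
  then have "card (offdiag N) = (\<Sum>i<N. card ({..<N} - {i}))"
    by (simp add: card_SigmaI)
  also have "\<dots> = (\<Sum>i<N. N - 1)"
    by (intro sum.cong) auto
  finally show ?thesis by simp
qed

lemma finite_digraphs: "finite (digraphs N E)"
  unfolding digraphs_def by (rule finite_subset[of _ "Pow (offdiag N)"]) (auto simp: finite_offdiag)

lemma digraphs_nonempty:
  assumes "E \<le> N * (N - 1)"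
  shows "digraphs N E \<noteq> {}"
  using obtain_subset_with_card_n[of E "offdiag N"] assms
  unfolding digraphs_def card_offdiag by blast

lemma finite_in_neighbours: "finite Z \<Longrightarrow> finite {i. (i, j) \<in> Z}"
  by (rule finite_subset[of _ "fst ` Z"]) force+

lemma in_degree_pos:
  assumes "finite Z" "(i, j) \<in> Z"
  shows "0 < in_degree Z j"
  using assms finite_in_neighbours[of Z j] unfolding in_degree_def by (auto simp: card_gt_0_iff)

lemma in_degree_remove_edge:
  assumes "finite Z" "(i, k) \<in> Z"
  shows "in_degree (Z - {(i, k)}) j = (if j = k then in_degree Z k - 1 else in_degree Z j)"
proof -
  have "{i'. (i', j) \<in> Z - {(i, k)}} = {i'. (i', j) \<in> Z} - (if j = k then {i} else {})"
    by auto
  then show ?thesis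
    using assms finite_in_neighbours[of Z j] unfolding in_degree_def by auto
qed

lemma sum_in_degree:
  assumes "Z \<subseteq> offdiag N"
  shows "(\<Sum>j<N. in_degree Z j) = card Z"
proof -
  have "finite Z"
    using assms finite_offdiag finite_subset by blast
  have "Z = (\<Union>j<N. (\<lambda>i. (i, j)) ` {i. (i, j) \<in> Z})"
    using assms unfolding offdiag_def by auto
  moreover have "card (\<Union>j<N. (\<lambda>i. (i, j)) ` {i. (i, j) \<in> Z})
      = (\<Sum>j<N. card ((\<lambda>i. (i, j)) ` {i. (i, j) \<in> Z}))"
    by (rule card_UN_disjoint) (auto simp: finite_in_neighbours[OF \<open>finite Z\<close>])
  ultimately have "card Z = (\<Sum>j<N. card ((\<lambda>i. (i, j)) ` {i. (i, j) \<in> Z}))"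
    by simp
  also have "\<dots> = (\<Sum>j<N. in_degree Z j)"
    unfolding in_degree_def by (intro sum.cong refl card_image) (auto simp: inj_on_def)
  finally show ?thesis by simp
qed

lemma graph_entropy_eq:
  assumes "Z \<subseteq> offdiag N" "0 < card Z"
  shows "graph_entropy N Z =
    (ln (card Z) - (\<Sum>j<N. real (in_degree Z j) * ln (in_degree Z j)) / card Z) / ln N"
proof -
  define n where "n = real (card Z)"
  have "0 < n" using assms n_def by simp
  have term_eq: "(real (in_degree Z j) / n) * ln (real (in_degree Z j) / n)
      = real (in_degree Z j) * ln (in_degree Z j) / n - real (in_degree Z j) * ln n / n" for j
    using \<open>0 < n\<close> by (cases "in_degree Z j = 0") (auto simp: ln_div field_simps)
  have "(\<Sum>j<N. real (in_degree Z j)) = n"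
    using sum_in_degree[OF assms(1)] n_def by (metis of_nat_sum)
  then have entropy_sum: "(\<Sum>j<N. (real (in_degree Z j) / n) * ln (real (in_degree Z j) / n))
      = (\<Sum>j<N. real (in_degree Z j) * ln (in_degree Z j)) / n - ln n"
    using \<open>0 < n\<close>
    unfolding term_eq by (simp add: sum_subtractf sum_divide_distrib[symmetric] sum_distrib_right[symmetric])
  show ?thesis
    unfolding graph_entropy_def n_def[symmetric] entropy_sum by (simp add: algebra_simps diff_divide_distrib)
qed

lemma card_mult_ln_le_sum_in_degree:
  assumes "Z \<subseteq> offdiag N" "0 < d" "\<And>j. j < N \<Longrightarrow> 0 < in_degree Z j \<Longrightarrow> d \<le> in_degree Z j"
  shows "real (card Z) * ln d \<le> (\<Sum>j<N. real (in_degree Z j) * ln (in_degree Z j))"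
proof -
  have "real (card Z) * ln d = (\<Sum>j<N. real (in_degree Z j) * ln d)"
    using sum_in_degree[OF assms(1)] by (metis of_nat_sum sum_distrib_right)
  also have "\<dots> \<le> (\<Sum>j<N. real (in_degree Z j) * ln (in_degree Z j))"
    using assms(2,3) by (intro sum_mono) (fastforce intro: mult_left_mono)
  finally show ?thesis .
qed

lemma ex_edge_into_min_in_degree:
  assumes "Z \<subseteq> offdiag N" "Z \<noteq> {}"
  obtains i k where "(i, k) \<in> Z"
    "\<And>j. j < N \<Longrightarrow> 0 < in_degree Z j \<Longrightarrow> in_degree Z k \<le> in_degree Z j"
proof -
  have "finite Z"
    using assms(1) finite_offdiag finite_subset by blast
  obtain i j where "(i, j) \<in> Z"
    using assms(2) by auto
  then have "j < N \<and> 0 < in_degree Z j"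
    using assms(1) in_degree_pos[OF \<open>finite Z\<close>] unfolding offdiag_def by auto
  then obtain k where k: "0 < in_degree Z k"
    and k_min: "\<And>j. j < N \<Longrightarrow> 0 < in_degree Z j \<Longrightarrow> in_degree Z k \<le> in_degree Z j"
    using ex_has_least_nat[of "\<lambda>j. j < N \<and> 0 < in_degree Z j" j "in_degree Z"] by blast
  then have "{i. (i, k) \<in> Z} \<noteq> {}"
    unfolding in_degree_def by (auto simp: card_gt_0_iff)
  with k_min that show ?thesis
    by blast
qed

lemma remove_edge_entropy_le:
  assumes "N \<ge> 2" "Z \<subseteq> offdiag N" "card Z = Suc m" "1 \<le> m"
  shows "\<exists>Z'. Z' \<subseteq> offdiag N \<and> card Z' = m \<and> graph_entropy N Z' \<le> graph_entropy N Z"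
proof -
  have "finite Z"
    using assms(2) finite_offdiag finite_subset by blast
  have "Z \<noteq> {}"
    using assms(3) by auto
  then obtain i k where "(i, k) \<in> Z"
    and k_min: "\<And>j. j < N \<Longrightarrow> 0 < in_degree Z j \<Longrightarrow> in_degree Z k \<le> in_degree Z j"
    using ex_edge_into_min_in_degree[OF assms(2)] by blast
  have k: "k < N" "0 < in_degree Z k"
    using assms(2) \<open>(i, k) \<in> Z\<close> in_degree_pos[OF \<open>finite Z\<close>] unfolding offdiag_def by auto
  define d where "d = in_degree Z k"
  define Z' where "Z' = Z - {(i, k)}"
  have "Z' \<subseteq> offdiag N" and card_Z': "card Z' = m"
    using assms(2,3) \<open>finite Z\<close> \<open>(i, k) \<in> Z\<close> unfolding Z'_def by auto
  define f where "f = (\<lambda>t::nat. real t * ln (real t))"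
  define S where "S = (\<Sum>j<N. f (in_degree Z j))"
  have S_split: "S = f d + (\<Sum>j\<in>{..<N} - {k}. f (in_degree Z j))"
    unfolding S_def d_def using k(1) by (simp add: sum.remove)
  have "(\<Sum>j<N. f (in_degree Z' j)) = f (d - 1) + (\<Sum>j\<in>{..<N} - {k}. f (in_degree Z j))"
    unfolding Z'_def in_degree_remove_edge[OF \<open>finite Z\<close> \<open>(i, k) \<in> Z\<close>] d_def
    using k(1) by (simp add: sum.remove)
  also have "\<dots> = S - real d * ln d + (real d - 1) * ln (real d - 1)"
    unfolding S_split f_def using k(2) d_def by (simp add: of_nat_diff)
  finally have S': "(\<Sum>j<N. f (in_degree Z' j)) = \<dots>" .
  have "d \<le> Suc m"
    using member_le_sum[of k "{..<N}" "in_degree Z"] k(1) sum_in_degree[OF assms(2)] assms(3)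
    unfolding d_def by simp
  have "real (Suc m) * ln d \<le> S"
    using card_mult_ln_le_sum_in_degree[OF assms(2), of d] k_min k(2) assms(3)
    unfolding S_def f_def d_def by simp
  then have "ln (real m) - (\<Sum>j<N. f (in_degree Z' j)) / real m \<le> ln (Suc m) - S / Suc m"
    using ln_minus_mean_le_after_decrement[of "Suc m" d S] assms(4) k(2) \<open>d \<le> Suc m\<close>
    unfolding S' d_def by simp
  moreover have "0 < ln (real N)"
    using assms(1) by simp
  ultimately have "graph_entropy N Z' \<le> graph_entropy N Z"
    using graph_entropy_eq[OF assms(2)] graph_entropy_eq[OF \<open>Z' \<subseteq> offdiag N\<close>] assms(3,4) card_Z'
    unfolding S_def f_def by (simp add: divide_right_mono)
  then show ?thesis
    using \<open>Z' \<subseteq> offdiag N\<close> card_Z' by blast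
qed

lemma min_entropy_le_Suc:
  assumes "N \<ge> 2" "1 \<le> E" "Suc E \<le> N * (N - 1)"
  shows "min_entropy N E \<le> min_entropy N (Suc E)"
proof -
  have "min_entropy N (Suc E) \<in> graph_entropy N ` digraphs N (Suc E)"
    unfolding min_entropy_def using finite_digraphs digraphs_nonempty[OF assms(3)] by (intro Min_in) auto
  then obtain W where W: "W \<in> digraphs N (Suc E)" "min_entropy N (Suc E) = graph_entropy N W"
    by auto
  then obtain W' where W': "W' \<in> digraphs N E" "graph_entropy N W' \<le> graph_entropy N W"
    using remove_edge_entropy_le[OF assms(1) _ _ assms(2)] unfolding digraphs_def by blast
  have "min_entropy N E \<le> graph_entropy N W'"
    unfolding min_entropy_def using finite_digraphs W'(1) by (intro Min_le) auto
  with W(2) W'(2) show ?thesis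
    by simp
qed

theorem corollary1:
  fixes N E1 E2 :: nat
  assumes "N \<ge> 2" and "1 \<le> E1" and "E1 \<le> E2" and "E2 \<le> N * (N - 1)"
  shows "min_entropy N E1 \<le> min_entropy N E2"
  using assms(3,4)
proof (induction E2 rule: dec_induct)
  case base
  then show ?case by simp
next
  case (step E)
  then have "min_entropy N E \<le> min_entropy N (Suc E)"
    using min_entropy_le_Suc[OF assms(1)] assms(2) by simp
  with step show ?case by simp
qed

end
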